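(* Let $G$ be a non-complete double-critical $k$-chromatic graph. For every vertex $x\in V(G)$, the minimum degree of the neighbourhood graph $G_x$ is at least $k-2$, i.e. $\delta(G_x)\ge k-2$.
   Context: All graphs are finite and simple. A graph $G$ is (vertex-)critical if $\chi(G-v)<\chi(G)$ for every vertex $v\in V(G)$. A critical graph $G$ is double-critical if $\chi(G-x-y)\le\chi(G)-2$ for every edge $xy\in E(G)$. For a vertex $x$, $G_x:=G[N(x)]$ denotes the subgraph induced by the (open) neighbourhood of $x$. *)

theory Defs
  imports Main
begin

definition simple_graph :: "'a set \<Rightarrow> ('a \<Rightarrow> 'a \<Rightarrow> bool) \<Rightarrow> bool" where
  "simple_graph V E \<longleftrightarrow> finite V \<and> (\<forall>x y. E x y \<longrightarrow> E y x) \<and> (\<forall>x. \<not> E x x)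
     \<and> (\<forall>x y. E x y \<longrightarrow> x \<in> V \<and> y \<in> V)"

text \<open>Subgraphs are taken as induced subgraphs on a vertex subset W of V,
  i.e. the graph (W, E restricted to W).\<close>
definition proper_colouring :: "'a set \<Rightarrow> ('a \<Rightarrow> 'a \<Rightarrow> bool) \<Rightarrow> nat \<Rightarrow> ('a \<Rightarrow> nat) \<Rightarrow> bool" where
  "proper_colouring W E k c \<longleftrightarrow> (\<forall>v\<in>W. c v < k) \<and> (\<forall>u\<in>W. \<forall>v\<in>W. E u v \<longrightarrow> c u \<noteq> c v)"

definition chi :: "'a set \<Rightarrow> ('a \<Rightarrow> 'a \<Rightarrow> bool) \<Rightarrow> nat" where
  "chi W E = (LEAST k. \<exists>c. proper_colouring W E k c)"

definition neighbours :: "'a set \<Rightarrow> ('a \<Rightarrow> 'a \<Rightarrow> bool) \<Rightarrow> 'a \<Rightarrow> 'a set" where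
  "neighbours V E x = {y \<in> V. E x y}"

definition complete_graph :: "'a set \<Rightarrow> ('a \<Rightarrow> 'a \<Rightarrow> bool) \<Rightarrow> bool" where
  "complete_graph V E \<longleftrightarrow> (\<forall>x\<in>V. \<forall>y\<in>V. x \<noteq> y \<longrightarrow> E x y)"

definition vertex_critical :: "'a set \<Rightarrow> ('a \<Rightarrow> 'a \<Rightarrow> bool) \<Rightarrow> bool" where
  "vertex_critical V E \<longleftrightarrow> (\<forall>v\<in>V. chi (V - {v}) E < chi V E)"

definition double_critical :: "'a set \<Rightarrow> ('a \<Rightarrow> 'a \<Rightarrow> bool) \<Rightarrow> bool" where
  "double_critical V E \<longleftrightarrow> vertex_critical V E \<and>
     (\<forall>x\<in>V. \<forall>y\<in>V. E x y \<longrightarrow> chi (V - {x, y}) E + 2 \<le> chi V E)"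

end

theory Submission
  imports Defs
begin

text \<open>Let \<open>xy\<close> be an edge and \<open>m = \<chi>(G - x - y) = k - 2\<close>. In an optimal colouring of
  \<open>G - x - y\<close> every colour class contains a common neighbour of \<open>x\<close> and \<open>y\<close>: otherwise
  \<open>x\<close> could take that colour, its neighbours of that colour and \<open>y\<close> a single new one,
  giving a \<open>(k - 1)\<close>-colouring of \<open>G\<close>. Hence \<open>x\<close> and \<open>y\<close> have at least \<open>k - 2\<close> common
  neighbours.\<close>

lemma chi_le_colouring:
  assumes "proper_colouring W E k c"
  shows "chi W E \<le> k"
  unfolding chi_def using assms by (intro Least_le) blast

lemma chi_colouring_exists:
  assumes "finite W" and irrefl: "\<And>a. \<not> E a a"
  obtains c where "proper_colouring W E (chi W E) c"
proof -
  obtain f :: "'a \<Rightarrow> nat" and n where f: "f ` W = {i. i < n}" "inj_on f W"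
    using finite_imp_inj_to_nat_seg[OF assms(1)] by blast
  have "proper_colouring W E n f"
    unfolding proper_colouring_def
  proof (intro conjI ballI impI)
    fix v assume "v \<in> W" then show "f v < n" using f(1) by blast
  next
    fix u v assume "u \<in> W" "v \<in> W" "E u v"
    then show "f u \<noteq> f v" using f(2) irrefl by (metis inj_on_def)
  qed
  then have "\<exists>k c. proper_colouring W E k c" by blast
  then have "\<exists>c. proper_colouring W E (chi W E) c"
    unfolding chi_def by (rule LeastI_ex)
  then show ?thesis using that by blast
qed

lemma chi_insert_le:
  assumes "finite W" and irrefl: "\<And>a. \<not> E a a"
  shows "chi (insert v W) E \<le> chi W E + 1"
proof -
  obtain c where c: "proper_colouring W E (chi W E) c"
    using chi_colouring_exists[OF assms] .
  have c_lt: "\<And>w. w \<in> W \<Longrightarrow> c w < chi W E"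
    and c_ne: "\<And>u w. u \<in> W \<Longrightarrow> w \<in> W \<Longrightarrow> E u w \<Longrightarrow> c u \<noteq> c w"
    using c unfolding proper_colouring_def by auto
  have "proper_colouring (insert v W) E (chi W E + 1) (c(v := chi W E))"
    unfolding proper_colouring_def
  proof (intro conjI ballI impI)
    fix w assume "w \<in> insert v W"
    then show "(c(v := chi W E)) w < chi W E + 1" using c_lt by fastforce
  next
    fix u w assume "u \<in> insert v W" "w \<in> insert v W" "E u w"
    moreover have "u \<noteq> w" using \<open>E u w\<close> irrefl by blast
    ultimately show "(c(v := chi W E)) u \<noteq> (c(v := chi W E)) w"
      using c_lt[of u] c_lt[of w] c_ne[of u w] by (cases "u = v"; cases "w = v") auto
  qed
  then show ?thesis by (rule chi_le_colouring)
qed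

lemma chi_le_chi_Diff_two_add_two:
  assumes "finite V" and "\<And>a. \<not> E a a" and "x \<in> V" "y \<in> V"
  shows "chi V E \<le> chi (V - {x, y}) E + 2"
proof -
  have "V = insert x (insert y (V - {x, y}))" using assms(3,4) by blast
  then have "chi V E \<le> chi (insert y (V - {x, y})) E + 1"
    using chi_insert_le[of "insert y (V - {x, y})" E x] assms(1,2) by simp
  also have "\<dots> \<le> chi (V - {x, y}) E + 2"
    using chi_insert_le[of "V - {x, y}" E y] assms(1,2) by simp
  finally show ?thesis .
qed

lemma colouring_extends_unless_common_neighbour:
  assumes sym: "\<And>a b. E a b \<Longrightarrow> E b a" and irrefl: "\<And>a. \<not> E a a" and "x \<noteq> y"
    and c: "proper_colouring (V - {x, y}) E m c" and "i < m"
    and no_common: "\<not> (\<exists>v\<in>V - {x, y}. c v = i \<and> E x v \<and> E y v)"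
  shows "proper_colouring V E (m + 1)
           (\<lambda>v. if v = x then i else if v = y then m
                 else if v \<in> V - {x, y} \<and> c v = i \<and> E x v then m else c v)"
  (is "proper_colouring V E (m + 1) ?c'")
proof -
  have c_lt: "\<And>v. v \<in> V - {x, y} \<Longrightarrow> c v < m"
    and c_ne: "\<And>u v. u \<in> V - {x, y} \<Longrightarrow> v \<in> V - {x, y} \<Longrightarrow> E u v \<Longrightarrow> c u \<noteq> c v"
    using c unfolding proper_colouring_def by auto
  show ?thesis
    unfolding proper_colouring_def
  proof (intro conjI ballI impI)
    fix v assume "v \<in> V" then show "?c' v < m + 1"
      using c_lt[of v] \<open>i < m\<close> by auto
  next
    fix u v assume "u \<in> V" "v \<in> V" "E u v"
    then have "u \<noteq> v" "E v u" using irrefl sym by blast+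
    consider "u \<in> V - {x, y}" "v \<in> V - {x, y}" | "u = x \<or> v = x" | "u = y \<or> v = y"
      using \<open>u \<in> V\<close> \<open>v \<in> V\<close> by blast
    then show "?c' u \<noteq> ?c' v"
    proof cases
      case 1
      then show ?thesis using c_lt[OF 1(1)] c_lt[OF 1(2)] c_ne[OF 1 \<open>E u v\<close>] 1 by auto
    next
      case 2
      then show ?thesis
        using c_lt[of u] c_lt[of v] \<open>u \<noteq> v\<close> \<open>E u v\<close> \<open>E v u\<close> \<open>x \<noteq> y\<close> \<open>i < m\<close>
          \<open>u \<in> V\<close> \<open>v \<in> V\<close>
        by auto
    next
      case 3
      then show ?thesis
        using c_lt[of u] c_lt[of v] no_common \<open>i < m\<close> \<open>u \<noteq> v\<close> \<open>E u v\<close> \<open>E v u\<close>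
          \<open>x \<noteq> y\<close> \<open>u \<in> V\<close> \<open>v \<in> V\<close>
        by auto
    qed
  qed
qed

lemma colour_classes_meet_common_neighbours:
  assumes "simple_graph V E" and "E x y"
    and c: "proper_colouring (V - {x, y}) E m c" and "m + 1 < chi V E" and "i < m"
  shows "\<exists>v\<in>V - {x, y}. c v = i \<and> E x v \<and> E y v"
proof (rule ccontr)
  assume no_common: "\<not> ?thesis"
  have sym: "\<And>a b. E a b \<Longrightarrow> E b a" and irrefl: "\<And>a. \<not> E a a"
    using assms(1) unfolding simple_graph_def by auto
  with \<open>E x y\<close> have "x \<noteq> y" by blast
  from colouring_extends_unless_common_neighbour[OF sym irrefl this c \<open>i < m\<close> no_common]
  have "chi V E \<le> m + 1" by (rule chi_le_colouring)
  then show False using \<open>m + 1 < chi V E\<close> by simp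
qed

lemma card_common_neighbours_ge:
  assumes graph: "simple_graph V E" and "E x y"
    and drop: "chi (V - {x, y}) E + 2 \<le> chi V E"
  shows "chi V E - 2 \<le> card (neighbours V E y \<inter> neighbours V E x)"
proof -
  have fin: "finite V" and irrefl: "\<And>a. \<not> E a a" and "x \<in> V" "y \<in> V"
    using graph \<open>E x y\<close> unfolding simple_graph_def by auto
  define m where "m = chi (V - {x, y}) E"
  define S where "S = neighbours V E y \<inter> neighbours V E x"
  obtain c where c: "proper_colouring (V - {x, y}) E m c"
    unfolding m_def using chi_colouring_exists fin irrefl by (metis finite_Diff)
  have "{..<m} \<subseteq> c ` S"
  proof
    fix i assume "i \<in> {..<m}"
    then obtain v where "v \<in> V - {x, y}" "c v = i" "E x v" "E y v"
      using colour_classes_meet_common_neighbours[OF graph \<open>E x y\<close> c] drop m_def by auto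
    then show "i \<in> c ` S" unfolding S_def neighbours_def by auto
  qed
  moreover have "finite S" using fin unfolding S_def neighbours_def by auto
  ultimately have "m \<le> card S"
    by (metis card_image_le card_lessThan card_mono finite_imageI le_trans)
  moreover have "chi V E \<le> m + 2"
    unfolding m_def using chi_le_chi_Diff_two_add_two fin irrefl \<open>x \<in> V\<close> \<open>y \<in> V\<close> .
  ultimately show ?thesis unfolding S_def by linarith
qed

theorem proposition6:
  fixes V :: "'a set" and E :: "'a \<Rightarrow> 'a \<Rightarrow> bool" and k :: nat
  assumes "simple_graph V E"
    and "double_critical V E"
    and "chi V E = k"
    and "\<not> complete_graph V E"
    and "x \<in> V"
  shows "\<forall>y \<in> neighbours V E x.
           k - 2 \<le> card (neighbours V E y \<inter> neighbours V E x)"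
proof
  fix y assume "y \<in> neighbours V E x"
  then have "y \<in> V" and "E x y" by (auto simp: neighbours_def)
  then have "chi (V - {x, y}) E + 2 \<le> chi V E"
    using assms(2,5) unfolding double_critical_def by blast
  then show "k - 2 \<le> card (neighbours V E y \<inter> neighbours V E x)"
    using card_common_neighbours_ge[OF assms(1) \<open>E x y\<close>] assms(3) by simp
qed

end
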